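(* The affine scheme $\mathscr{H}_{\mathbb{A}}^{13}\cap\{p_{221}=p_{212}=p_{122}=1,\ p_{222}=p_{211}=p_{121}=p_{112}=0\}$ coincides with $\mathscr{S}_{\mathbb{A}}^{6}$ under the identification of coordinates $s_{11}=u_1$, $s_{12}=x_{13}$, $s_{13}=x_{12}$, $s_{22}=u_2$, $s_{23}=x_{11}$, $s_{33}=u_3$, $\sigma_1=x_{21}$, $\sigma_2=x_{22}$, $\sigma_3=x_{23}$, $t=-p_{111}$ (left-hand sides are coordinates of $\mathscr{S}_{\mathbb{A}}^6$, right-hand sides those of $\mathscr{H}_{\mathbb{A}}^{13}$).
   Context: $\mathscr{H}_{\mathbb{A}}^{13}\subset\mathbb{A}^{17}$ (coordinates $u_1,u_2,u_3$, $x_{ij}$ with $i\in\{1,2\},j\in\{1,2,3\}$, $p_{abc}$ with $a,b,c\in\{1,2\}$) is defined by $-u_1\bm{x}_1+D^{(3)}\bm{x}_2=\bm{0}$, $-u_2\bm{x}_2+D^{(1)}\bm{x}_3=\bm{0}$, $-u_3\bm{x}_3-(D^{(2)})^{\dagger}\bm{x}_1=\bm{0}$, $u_2u_3+\det D^{(1)}=0$, $u_3u_1+\det D^{(2)}=0$, $u_1u_2+\det D^{(3)}=0$, where $\bm{x}_j=(x_{1j},x_{2j})^t$, $M^\dagger$ is the adjugate, $D^{(1)}_{ij}=p_{1ij}x_{21}-p_{2ij}x_{11}$, $D^{(2)}_{ij}=p_{i1j}x_{22}-p_{i2j}x_{12}$, $D^{(3)}_{ij}=p_{ij1}x_{23}-p_{ij2}x_{13}$,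 $D^{(k)}$ has rows $(-D^{(k)}_{12},D^{(k)}_{11})$, $(-D^{(k)}_{22},D^{(k)}_{21})$. $\mathscr{S}_{\mathbb{A}}^{6}$ is the affine scheme in the $10$-dimensional affine space with coordinates $s_{11},s_{12},s_{13},s_{22},s_{23},s_{33},\sigma_1,\sigma_2,\sigma_3,t$ defined by $\mathsf{S}\bm{\sigma}=\bm{0}$ and $\mathsf{S}^{\dagger}=t\,\bm{\sigma}\,{}^t\bm{\sigma}$, where $\mathsf{S}$ is the symmetric matrix $(s_{ij})$ (with $s_{ji}=s_{ij}$), $\bm{\sigma}=(\sigma_1,\sigma_2,\sigma_3)^t$, and $\mathsf{S}^\dagger$ is the adjugate. *)

theory Defs
  imports Main
begin

text \<open>Affine schemes given by explicit equations are compared through their functors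
of points: two closed subschemes of affine space over Z coincide iff, for every
commutative ring R, they have the same R-valued points (Yoneda, using R = Z[X]/I).
Coordinates are functions of 1-based indices.\<close>

definition det2 :: "(nat \<Rightarrow> nat \<Rightarrow> 'a::comm_ring_1) \<Rightarrow> 'a" where
  "det2 M = M 1 1 * M 2 2 - M 1 2 * M 2 1"

definition adj2 :: "(nat \<Rightarrow> nat \<Rightarrow> 'a::comm_ring_1) \<Rightarrow> nat \<Rightarrow> nat \<Rightarrow> 'a" where
  "adj2 M i j =
     (if i = 1 \<and> j = 1 then M 2 2 else if i = 1 \<and> j = 2 then - M 1 2
      else if i = 2 \<and> j = 1 then - M 2 1 else M 1 1)"

definition mulv2 :: "(nat \<Rightarrow> nat \<Rightarrow> 'a::comm_ring_1) \<Rightarrow> (nat \<Rightarrow> 'a) \<Rightarrow> nat \<Rightarrow> 'a" where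
  "mulv2 M v i = M i 1 * v 1 + M i 2 * v 2"

definition Dent :: "(nat \<Rightarrow> nat \<Rightarrow> nat \<Rightarrow> 'a::comm_ring_1) \<Rightarrow> (nat \<Rightarrow> nat \<Rightarrow> 'a) \<Rightarrow> nat \<Rightarrow> nat \<Rightarrow> nat \<Rightarrow> 'a" where
  "Dent p x k i j =
     (if k = 1 then p 1 i j * x 2 1 - p 2 i j * x 1 1
      else if k = 2 then p i 1 j * x 2 2 - p i 2 j * x 1 2
      else p i j 1 * x 2 3 - p i j 2 * x 1 3)"

definition Dmat :: "(nat \<Rightarrow> nat \<Rightarrow> nat \<Rightarrow> 'a::comm_ring_1) \<Rightarrow> (nat \<Rightarrow> nat \<Rightarrow> 'a) \<Rightarrow> nat \<Rightarrow> nat \<Rightarrow> nat \<Rightarrow> 'a" where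
  "Dmat p x k r c = (if c = 1 then - Dent p x k r 2 else Dent p x k r 1)"

definition xcol :: "(nat \<Rightarrow> nat \<Rightarrow> 'a) \<Rightarrow> nat \<Rightarrow> nat \<Rightarrow> 'a" where
  "xcol x j = (\<lambda>i. x i j)"

definition H_eqs :: "(nat \<Rightarrow> 'a::comm_ring_1) \<Rightarrow> (nat \<Rightarrow> nat \<Rightarrow> 'a) \<Rightarrow> (nat \<Rightarrow> nat \<Rightarrow> nat \<Rightarrow> 'a) \<Rightarrow> bool" where
  "H_eqs u x p \<longleftrightarrow>
     (\<forall>i\<in>{1,2}. - u 1 * xcol x 1 i + mulv2 (Dmat p x 3) (xcol x 2) i = 0) \<and>
     (\<forall>i\<in>{1,2}. - u 2 * xcol x 2 i + mulv2 (Dmat p x 1) (xcol x 3) i = 0) \<and>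
     (\<forall>i\<in>{1,2}. - u 3 * xcol x 3 i - mulv2 (adj2 (Dmat p x 2)) (xcol x 1) i = 0) \<and>
     u 2 * u 3 + det2 (Dmat p x 1) = 0 \<and>
     u 3 * u 1 + det2 (Dmat p x 2) = 0 \<and>
     u 1 * u 2 + det2 (Dmat p x 3) = 0"

text \<open>Adjugate of a 3x3 matrix (indices 1..3), cyclic cofactor formula:
  adj(A)_{ij} = A_{j+1,i+1} A_{j+2,i+2} - A_{j+1,i+2} A_{j+2,i+1}, indices mod 3.\<close>
definition nxt3 :: "nat \<Rightarrow> nat" where
  "nxt3 k = k mod 3 + 1"

definition adj3 :: "(nat \<Rightarrow> nat \<Rightarrow> 'a::comm_ring_1) \<Rightarrow> nat \<Rightarrow> nat \<Rightarrow> 'a" where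
  "adj3 A i j =
     A (nxt3 j) (nxt3 i) * A (nxt3 (nxt3 j)) (nxt3 (nxt3 i))
   - A (nxt3 j) (nxt3 (nxt3 i)) * A (nxt3 (nxt3 j)) (nxt3 i)"

definition S_eqs :: "(nat \<Rightarrow> nat \<Rightarrow> 'a::comm_ring_1) \<Rightarrow> (nat \<Rightarrow> 'a) \<Rightarrow> 'a \<Rightarrow> bool" where
  "S_eqs S \<sigma> t \<longleftrightarrow>
     (\<forall>i\<in>{1,2,3}. (\<Sum>j\<in>{1,2,3}. S i j * \<sigma> j) = 0) \<and>
     (\<forall>i\<in>{1,2,3}. \<forall>j\<in>{1,2,3}. adj3 S i j = t * \<sigma> i * \<sigma> j)"

end

theory Submission
  imports Defs
begin

text \<open>On this slice every D^(k) becomes the traceless matrix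
  [[x_1k, p_111 x_2k], [-x_2k, -x_1k]]. Under the identification of coordinates, the second
  components of the three vector equations of H are then the rows of S sigma = 0, and their first
  components together with the three quadrics are the six upper-triangular entries of
  adj S = t sigma sigma^t; the other entries add nothing, as adj S and sigma sigma^t are symmetric.\<close>

definition special_cube :: "'a \<Rightarrow> nat \<Rightarrow> nat \<Rightarrow> nat \<Rightarrow> 'a::comm_ring_1" where
  "special_cube c =
     (\<lambda>a b d. if (a, b, d) = (1, 1, 1) then c
              else if (a, b, d) \<in> {(2, 2, 1), (2, 1, 2), (1, 2, 2)} then 1
              else 0)"

definition Smat_of :: "(nat \<Rightarrow> 'a) \<Rightarrow> (nat \<Rightarrow> nat \<Rightarrow> 'a) \<Rightarrow> nat \<Rightarrow> nat \<Rightarrow> 'a" where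
  "Smat_of u x =
     (\<lambda>i j. if i = 1 \<and> j = 1 then u 1
            else if i = 2 \<and> j = 2 then u 2
            else if i = 3 \<and> j = 3 then u 3
            else if {i, j} = {1, 2} then x 1 3
            else if {i, j} = {1, 3} then x 1 2
            else x 1 1)"

lemma Dmat_special_cube:
  assumes "k \<in> {1, 2, 3}"
  shows "Dmat (special_cube c) x k 1 1 = x 1 k" "Dmat (special_cube c) x k 1 2 = c * x 2 k"
    "Dmat (special_cube c) x k 2 1 = - x 2 k" "Dmat (special_cube c) x k 2 2 = - x 1 k"
  using assms by (auto simp: Dmat_def Dent_def special_cube_def)

lemma adj3_symmetric:
  assumes "\<And>i j. i \<in> {1, 2, 3} \<Longrightarrow> j \<in> {1, 2, 3} \<Longrightarrow> S i j = S j i"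
  shows "adj3 S j i = adj3 S i j"
proof -
  have "nxt3 k \<in> {1, 2, 3}" for k
    unfolding nxt3_def by auto
  then show ?thesis
    unfolding adj3_def by (simp add: assms mult.commute)
qed

lemma S_eqs_symmetric:
  assumes "\<And>i j. i \<in> {1, 2, 3} \<Longrightarrow> j \<in> {1, 2, 3} \<Longrightarrow> S i j = S j i"
  shows "S_eqs S \<sigma> t \<longleftrightarrow>
    (\<forall>i\<in>{1, 2, 3}. (\<Sum>j\<in>{1, 2, 3}. S i j * \<sigma> j) = 0) \<and>
    (\<forall>i\<in>{1, 2, 3}. \<forall>j\<in>{1, 2, 3}. i \<le> j \<longrightarrow> adj3 S i j = t * \<sigma> i * \<sigma> j)"
proof -
  have "adj3 S i j = t * \<sigma> i * \<sigma> j" if "adj3 S j i = t * \<sigma> j * \<sigma> i" for i j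
    using that adj3_symmetric[OF assms] by (simp add: ac_simps)
  then show ?thesis
    unfolding S_eqs_def by (meson nle_le)
qed

lemma H_eqs_special_cube_iff_S_eqs:
  "H_eqs u x (special_cube c) \<longleftrightarrow> S_eqs (Smat_of u x) (x 2) (- c)"
proof -
  \<comment> \<open>\<open>One_nat_def\<close> would turn the indices \<open>1\<close> into \<open>Suc 0\<close>, where \<open>Dmat_special_cube\<close> no longer matches.\<close>
  have "H_eqs u x (special_cube c) \<longleftrightarrow>
      (\<forall>i\<in>{1, 2, 3}. (\<Sum>j\<in>{1, 2, 3}. Smat_of u x i j * x 2 j) = 0) \<and>
      (\<forall>i\<in>{1, 2, 3}. \<forall>j\<in>{1, 2, 3}. i \<le> j \<longrightarrow> adj3 (Smat_of u x) i j = - c * x 2 i * x 2 j)"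
    by (auto simp: H_eqs_def mulv2_def adj2_def det2_def xcol_def Dmat_special_cube
        Smat_of_def adj3_def nxt3_def doubleton_eq_iff algebra_simps neg_eq_iff_add_eq_0
        simp del: One_nat_def)
  also have "\<dots> \<longleftrightarrow> S_eqs (Smat_of u x) (x 2) (- c)"
    by (rule S_eqs_symmetric[symmetric]) (auto simp: Smat_of_def insert_commute)
  finally show ?thesis .
qed

theorem proposition6p7:
  fixes u1 u2 u3 x11 x12 x13 x21 x22 x23 p111 :: "'a::comm_ring_1"
  shows "H_eqs
           (\<lambda>k. if k = 1 then u1 else if k = 2 then u2 else u3)
           (\<lambda>i j. if i = 1 then (if j = 1 then x11 else if j = 2 then x12 else x13)
                  else (if j = 1 then x21 else if j = 2 then x22 else x23))
           (\<lambda>a b c. if (a, b, c) = (1, 1, 1) then p111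
                    else if (a, b, c) \<in> {(2, 2, 1), (2, 1, 2), (1, 2, 2)} then 1
                    else 0)
         \<longleftrightarrow>
         S_eqs
           (\<lambda>i j. if i = 1 \<and> j = 1 then u1
                  else if i = 2 \<and> j = 2 then u2
                  else if i = 3 \<and> j = 3 then u3
                  else if {i, j} = {1, 2} then x13
                  else if {i, j} = {1, 3} then x12
                  else x11)
           (\<lambda>k. if k = 1 then x21 else if k = 2 then x22 else x23)
           (- p111)"
    (is "H_eqs ?u ?x ?p \<longleftrightarrow> S_eqs ?S ?\<sigma> _")
proof -
  have "special_cube p111 = ?p"
    unfolding special_cube_def ..
  moreover have "Smat_of ?u ?x = ?S"
    by (simp add: Smat_of_def)
  moreover have "?x 2 = ?\<sigma>"
    by simp
  ultimately show ?thesis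
    using H_eqs_special_cube_iff_S_eqs[of ?u ?x p111] by simp
qed

end
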